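(* Let $(\mathcal{T}(n))_{n\ge1}$ be the delayed attachment tree process with $\beta\in[0,1)$, where $f$ satisfies Assumption 1 and $(\mu,f)$ satisfy Assumption 2. Let $Z_k(n):=\#\{v\in\mathcal{T}(n):\deg(v,n)=k\}$ and $\Psi(n):=\sum_{v\in\mathcal{T}(n)}f(\deg(v,n))=\sum_{k\ge1}f(k)Z_k(n)$. Define, for $n\ge2$, $$\pi_1(n):=\mathbb{E}[Z_1(n+1)-Z_1(n)\mid\mathcal{F}_n]-1+f(1)\frac{Z_1(n)}{\Psi(n)},$$ $$\pi_k(n):=\mathbb{E}[Z_k(n+1)-Z_k(n)\mid\mathcal{F}_n]-f(k-1)\frac{Z_{k-1}(n)}{\Psi(n)}+f(k)\frac{Z_k(n)}{\Psi(n)},\qquad k\ge2.$$ Then for every $k\ge1$, $\pi_k(n)\to0$ almost surely and in $L^1$ as $n\to\infty$.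
   Context: Model. Fix $\beta\in[0,1)$, a probability distribution $\mu$ on $[0,\infty)$ (the delay distribution) and a function $f:\{1,2,\dots\}\to(0,\infty)$ (the attachment function); $\xi$ denotes a generic random variable with law $\mu$. For $x\in\mathbb{R}$ let $\lfloor x\rfloor_+:=\max\{\lfloor x\rfloor,1\}$. A sequence of random rooted trees $(\mathcal{T}(n))_{n\ge1}$ is grown as follows; $\mathcal{T}(n)$ has vertex set $\{v_1,\dots,v_n\}$ and root $\rho=v_1$. - $\mathcal{T}(1)$ consists of $v_1$ alone, and $\mathcal{T}(2)$ consists of $v_1,v_2$ with $v_1$ the parent of $v_2$. - For $j\ge i$, $\deg(v_i,j)$ is the number of children of $v_i$ in $\mathcal{T}(j)$ plus one (so $\deg(v_i,i)=1$), and $\deg(v_i,j):=0$ for $j<i$. - For $n\ge2$, given $\mathcal{T}(1),\dots,\mathcal{T}(n)$, draw $\xi_{n+1}\sim\mu$ independently of everything before and put $m:=\lfloor n-n^{\beta}\xi_{n+1}\rfloor_+$. The new vertex $v_{n+1}$ chooses its parent $v\in\mathcal{T}(m)$ with probability $f(\deg(v,m))/\sum_{u\in\mathcal{T}(m)}f(\deg(u,m))$, and $\mathcal{T}(n+1)$ is $\mathcal{T}(n)$ together with this new vertex and edge. - $\mathcal{F}_n$ denotes the $\sigma$-field generated by $\mathcal{T}(1),\dots,\mathcal{T}(n)$ and $\xi_2,\dots,\xi_n$. Assumption 1 on $f$: (i) $f_*:=\inf_{k\ge1}f(k)>0$; (ii) there is $C<\infty$ with $f(k)\le Ck$ for all $k\ge1$;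 (iii) for $\lambda>0$ let $\hat\rho(\lambda):=\sum_{k=1}^\infty\prod_{i=1}^k\frac{f(i)}{\lambda+f(i)}\in(0,\infty]$ and $\underline\lambda:=\inf\{\lambda>0:\hat\rho(\lambda)<\infty\}$; then $\underline\lambda<\infty$ and $\lim_{\lambda\downarrow\underline\lambda}\hat\rho(\lambda)>1$. The Malthusian parameter $\lambda^*\in(0,\infty)$ is the unique solution of $\hat\rho(\lambda^* )=1$. Assumption 2: (a) $\lim_{n\to\infty}\mathbb{E}\Big[\frac{n^\beta\xi\,\mathbf 1\{n-n^\beta\xi\ge1\}}{\lfloor n-n^\beta\xi\rfloor_+}\Big]=0$; (b) $f$ satisfies one of the following: (A) $f(k)=k+\alpha$ for all $k\ge1$, for a constant $\alpha>-1$; (B) $\lim_{k\to\infty}f(k)/k=0$ and $f$ is Lipschitz; (C) $\lim_{k\to\infty}f(k)/k=0$ and $f$ is non-decreasing. *)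

theory Defs
  imports "HOL-Probability.Probability"
begin

text \<open>Vertices v_1, v_2, ... are encoded by their indices 1, 2, ...; a realisation of the
tree process is encoded by the parent map par, where par l is the index of the
parent of v_l (l \<ge> 2).\<close>

definition floor_plus :: "real \<Rightarrow> int" where
  "floor_plus x = max \<lfloor>x\<rfloor> 1"

definition tdeg :: "(nat \<Rightarrow> nat) \<Rightarrow> nat \<Rightarrow> nat \<Rightarrow> nat" where
  "tdeg par i j = (if i \<le> j then 1 + card {l \<in> {i+1..j}. par l = i} else 0)"

definition delay_time :: "real \<Rightarrow> nat \<Rightarrow> real \<Rightarrow> nat" where
  "delay_time \<beta> n x = nat (floor_plus (real n - real n powr \<beta> * x))"

text \<open>Probability that v_{n+1} chooses v_i as its parent, given the past and xi_{n+1} = x.\<close>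
definition attach_prob ::
  "(nat \<Rightarrow> real) \<Rightarrow> real \<Rightarrow> nat \<Rightarrow> (nat \<Rightarrow> nat) \<Rightarrow> nat \<Rightarrow> real \<Rightarrow> real" where
  "attach_prob f \<beta> n par i x =
     (let m = delay_time \<beta> n x in
      if 1 \<le> i \<and> i \<le> m
      then f (tdeg par i m) / (\<Sum>u\<in>{1..m}. f (tdeg par u m))
      else 0)"

definition Zcount :: "(nat \<Rightarrow> nat) \<Rightarrow> nat \<Rightarrow> nat \<Rightarrow> nat" where
  "Zcount par k n = card {u \<in> {1..n}. tdeg par u n = k}"

definition Psi :: "(nat \<Rightarrow> real) \<Rightarrow> (nat \<Rightarrow> nat) \<Rightarrow> nat \<Rightarrow> real" where
  "Psi f par n = (\<Sum>u\<in>{1..n}. f (tdeg par u n))"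

text \<open>The sigma-field F_n generated by T(1),...,T(n) (i.e. par 2, ..., par n) and xi_2, ..., xi_n.\<close>
definition filt :: "'a measure \<Rightarrow> (nat \<Rightarrow> 'a \<Rightarrow> nat) \<Rightarrow> (nat \<Rightarrow> 'a \<Rightarrow> real) \<Rightarrow> nat \<Rightarrow> 'a measure" where
  "filt M par xi n = sigma (space M)
     ((\<Union>k\<in>{2..n}. {par k -` {i} \<inter> space M | i. True}) \<union>
      (\<Union>k\<in>{2..n}. {xi k -` B \<inter> space M | B. B \<in> sets borel}))"

definition rho_hat :: "(nat \<Rightarrow> real) \<Rightarrow> real \<Rightarrow> ereal" where
  "rho_hat f lam = (\<Sum>k. ereal (\<Prod>i\<in>{1..Suc k}. f i / (lam + f i)))"

definition lambda_under :: "(nat \<Rightarrow> real) \<Rightarrow> real" where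
  "lambda_under f = Inf {lam. lam > 0 \<and> rho_hat f lam < \<infinity>}"

definition assumption1 :: "(nat \<Rightarrow> real) \<Rightarrow> bool" where
  "assumption1 f \<longleftrightarrow>
     (\<forall>k\<ge>1. f k > 0) \<and>
     (INF k\<in>{1..}. f k) > 0 \<and>
     (\<exists>C. \<forall>k\<ge>1. f k \<le> C * real k) \<and>
     {lam. lam > 0 \<and> rho_hat f lam < \<infinity>} \<noteq> {} \<and>
     (\<exists>L. ((rho_hat f) \<longlongrightarrow> L) (at_right (lambda_under f)) \<and> L > 1)"

definition assumption2 :: "real \<Rightarrow> real measure \<Rightarrow> (nat \<Rightarrow> real) \<Rightarrow> bool" where
  "assumption2 \<beta> \<mu> f \<longleftrightarrow>
     ((\<lambda>n::nat. \<integral>x. (real n powr \<beta> * x * indicator {x. real n - real n powr \<beta> * x \<ge> 1} x)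
                       / real_of_int (floor_plus (real n - real n powr \<beta> * x)) \<partial>\<mu>)
        \<longlonglongrightarrow> 0) \<and>
     ((\<exists>\<alpha>>-1. \<forall>k\<ge>1. f k = real k + \<alpha>) \<or>
      (((\<lambda>k. f k / real k) \<longlonglongrightarrow> 0) \<and>
         (\<exists>L. \<forall>j\<ge>1. \<forall>k\<ge>1. \<bar>f j - f k\<bar> \<le> L * \<bar>real j - real k\<bar>)) \<or>
      (((\<lambda>k. f k / real k) \<longlonglongrightarrow> 0) \<and> mono_on {1..} f))"

definition delayed_tree_process ::
  "'a measure \<Rightarrow> real \<Rightarrow> real measure \<Rightarrow> (nat \<Rightarrow> real) \<Rightarrow>
   (nat \<Rightarrow> 'a \<Rightarrow> nat) \<Rightarrow> (nat \<Rightarrow> 'a \<Rightarrow> real) \<Rightarrow> bool" where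
  "delayed_tree_process M \<beta> \<mu> f par xi \<longleftrightarrow>
     (\<forall>n. par n \<in> measurable M (count_space UNIV)) \<and>
     (\<forall>n. xi n \<in> borel_measurable M) \<and>
     (\<forall>\<omega>\<in>space M. par 2 \<omega> = 1) \<and>
     (\<forall>n\<ge>2. \<forall>A\<in>sets (filt M par xi n). \<forall>B\<in>sets borel. \<forall>i.
        measure M {\<omega>\<in>space M. \<omega> \<in> A \<and> xi (Suc n) \<omega> \<in> B \<and> par (Suc n) \<omega> = i}
        = (\<integral>\<omega>. indicator A \<omega> *
              (\<integral>x. indicator B x * attach_prob f \<beta> n (\<lambda>l. par l \<omega>) i x \<partial>\<mu>) \<partial>M))"

definition pi_k ::
  "'a measure \<Rightarrow> (nat \<Rightarrow> real) \<Rightarrow> (nat \<Rightarrow> 'a \<Rightarrow> nat) \<Rightarrow> (nat \<Rightarrow> 'a \<Rightarrow> real) \<Rightarrow> nat \<Rightarrow> nat \<Rightarrow> 'a \<Rightarrow> real" where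
  "pi_k M f par xi k n \<omega> =
     real_cond_exp M (filt M par xi n)
       (\<lambda>\<omega>. real (Zcount (\<lambda>l. par l \<omega>) k (Suc n)) - real (Zcount (\<lambda>l. par l \<omega>) k n)) \<omega>
     - (if k = 1 then 1
        else f (k - 1) * real (Zcount (\<lambda>l. par l \<omega>) (k - 1) n) / Psi f (\<lambda>l. par l \<omega>) n)
     + f k * real (Zcount (\<lambda>l. par l \<omega>) k n) / Psi f (\<lambda>l. par l \<omega>) n"

end

theory Submission
  imports Defs
begin

text \<open>Given \<open>\<F>\<^sub>n\<close>, the vertex \<open>v\<^sub>n\<^sub>+\<^sub>1\<close> attaches to \<open>v\<^sub>i\<close> with probability
  \<open>P\<^sub>i = E\<^sub>\<xi>[f(deg(v\<^sub>i,m)) / \<Psi>(m)]\<close>, \<open>m = \<lfloor>n - n\<^sup>\<beta>\<xi>\<rfloor>\<^sub>+\<close>. Attaching to a vertex of degree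
  \<open>k - 1\<close> creates a vertex of degree \<open>k\<close> and attaching to one of degree \<open>k\<close> destroys one, so
  \<open>E[Z\<^sub>k(n+1) - Z\<^sub>k(n) | \<F>\<^sub>n]\<close> is a sum of the \<open>P\<^sub>i\<close>, and \<open>\<pi>\<^sub>k(n)\<close> is the difference of the
  mean errors \<open>E\<^sub>\<xi>[\<Sum>\<^bsub>deg(v,n) = j\<^esub> f(deg(v,m))/\<Psi>(m) - f(j) Z\<^sub>j(n)/\<Psi>(n)]\<close> for \<open>j = k - 1, k\<close>.
  Between the times \<open>m\<close> and \<open>n\<close> only \<open>n - m\<close> edges arrive; since \<open>f\<close> is affine, Lipschitz, or
  sublinear and monotone, \<open>|f(d') - f(d)| \<le> \<delta> d' + K (d' - d)\<close> for every \<open>\<delta> > 0\<close>, and the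
  error is at most \<open>A (n - m)/m + B \<delta>\<close>, uniformly in the tree. For every \<open>\<xi> \<ge> 0\<close> the ratio
  \<open>(n - m)/m\<close> tends to 0 because \<open>\<beta> < 1\<close>, and the error is bounded by 1, so by dominated
  convergence the mean errors tend to 0 uniformly in the tree; a uniform deterministic bound
  gives both almost sure and \<open>L\<^sup>1\<close> convergence.\<close>

lemma tdeg_split:
  assumes "i \<le> m" "m \<le> n"
  shows "tdeg p i n = tdeg p i m + card {l\<in>{m+1..n}. p l = i}"
proof -
  have "{l\<in>{i+1..n}. p l = i} = {l\<in>{i+1..m}. p l = i} \<union> {l\<in>{m+1..n}. p l = i}"
    using assms by auto
  moreover have "card ({l\<in>{i+1..m}. p l = i} \<union> {l\<in>{m+1..n}. p l = i})
     = card {l\<in>{i+1..m}. p l = i} + card {l\<in>{m+1..n}. p l = i}"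
    by (rule card_Un_disjoint) auto
  ultimately show ?thesis using assms by (simp add: tdeg_def)
qed

lemma tdeg_mono: "i \<le> m \<Longrightarrow> m \<le> n \<Longrightarrow> tdeg p i m \<le> tdeg p i n"
  using tdeg_split[of i m n p] by simp

lemma tdeg_ge_1: "i \<le> j \<Longrightarrow> 1 \<le> tdeg p i j"
  by (simp add: tdeg_def)

lemma tdeg_Suc: "i \<le> n \<Longrightarrow> tdeg p i (Suc n) = tdeg p i n + (if p (Suc n) = i then 1 else 0)"
proof -
  assume "i \<le> n"
  moreover have "{l\<in>{n+1..Suc n}. p l = i} = (if p (Suc n) = i then {Suc n} else {})" by auto
  ultimately show ?thesis using tdeg_split[of i n "Suc n" p] by simp
qed

lemma tdeg_cong:
  assumes "\<forall>l\<in>{i+1..j}. p l = q l"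
  shows "tdeg p i j = tdeg q i j"
proof -
  have "{l\<in>{i+1..j}. p l = i} = {l\<in>{i+1..j}. q l = i}"
    using assms by (intro Collect_cong) (metis atLeastAtMost_iff)
  then show ?thesis by (simp add: tdeg_def)
qed

lemma sum_card_fibres_le:
  assumes "finite L"
  shows "(\<Sum>i\<in>I. card {l\<in>L. p l = i}) \<le> card L"
proof (cases "finite I")
  case True
  then have "(\<Sum>i\<in>I. card {l\<in>L. p l = i}) = card (\<Union>i\<in>I. {l\<in>L. p l = i})"
    using assms by (intro card_UN_disjoint[symmetric]) auto
  also have "\<dots> \<le> card L" using assms by (intro card_mono) auto
  finally show ?thesis .
qed simp

lemma sum_tdeg_growth_le:
  assumes "m \<le> n"
  shows "(\<Sum>i\<in>{1..m}. real (tdeg p i n) - real (tdeg p i m)) \<le> real n - real m"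
proof -
  have "(\<Sum>i\<in>{1..m}. real (tdeg p i n) - real (tdeg p i m))
      = real (\<Sum>i\<in>{1..m}. card {l\<in>{m+1..n}. p l = i})"
    using tdeg_split[OF _ assms, of _ p] by (simp add: of_nat_sum)
  also have "\<dots> \<le> real (card {m+1..n})"
    using sum_card_fibres_le[of "{m+1..n}"] by (simp only: of_nat_le_iff) simp
  finally show ?thesis using assms by simp
qed

text \<open>With \<open>m = 0\<close> this is the handshake bound \<open>\<Sum> deg \<le> 2n\<close>.\<close>
lemma sum_tdeg_tail_le:
  assumes "m \<le> n"
  shows "(\<Sum>i\<in>{m+1..n}. real (tdeg p i n)) \<le> 2 * (real n - real m)"
proof -
  have "(\<Sum>i\<in>{m+1..n}. real (tdeg p i n)) \<le> (\<Sum>i\<in>{m+1..n}. 1 + real (card {l\<in>{m+1..n}. p l = i}))"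
  proof (rule sum_mono)
    fix i assume i: "i \<in> {m+1..n}"
    have "card {l\<in>{i+1..n}. p l = i} \<le> card {l\<in>{m+1..n}. p l = i}"
      using i by (intro card_mono) auto
    then show "real (tdeg p i n) \<le> 1 + real (card {l\<in>{m+1..n}. p l = i})"
      using i by (simp add: tdeg_def)
  qed
  also have "\<dots> = real (card {m+1..n}) + real (\<Sum>i\<in>{m+1..n}. card {l\<in>{m+1..n}. p l = i})"
    by (simp add: sum.distrib of_nat_sum)
  also have "\<dots> \<le> real (card {m+1..n}) + real (card {m+1..n})"
    using sum_card_fibres_le[of "{m+1..n}" p "{m+1..n}"] by (simp only: add_le_cancel_left of_nat_le_iff) simp
  also have "\<dots> = 2 * (real n - real m)" using assms by simp
  finally show ?thesis .
qed

lemma Zcount_eq_sum: "real (Zcount p j n) = (\<Sum>i\<in>{1..n}. if tdeg p i n = j then 1 else 0)"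
  unfolding Zcount_def real_of_card by (rule sum.inter_filter) simp

lemma Psi_cong: "\<forall>l\<in>{2..n}. p l = q l \<Longrightarrow> j \<le> n \<Longrightarrow> Psi f p j = Psi f q j"
  unfolding Psi_def by (intro sum.cong refl arg_cong[where f = f] tdeg_cong) auto

lemma Psi_ge:
  assumes "\<forall>k\<ge>1. fs \<le> f k"
  shows "fs * real m \<le> Psi f p m"
proof -
  have "(\<Sum>u\<in>{1..m}. fs) \<le> Psi f p m"
    unfolding Psi_def by (rule sum_mono) (use assms tdeg_ge_1 in auto)
  then show ?thesis by (simp add: mult.commute)
qed

lemma Psi_pos: "\<forall>k\<ge>1. 0 < f k \<Longrightarrow> 1 \<le> m \<Longrightarrow> 0 < Psi f p m"
  unfolding Psi_def using tdeg_ge_1 by (intro sum_pos) auto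

lemma Zcount_split:
  assumes "m \<le> n"
  shows "Zcount p j n = card {i\<in>{1..m}. tdeg p i n = j} + card {i\<in>{m+1..n}. tdeg p i n = j}"
proof -
  have "{i\<in>{1..n}. tdeg p i n = j} = {i\<in>{1..m}. tdeg p i n = j} \<union> {i\<in>{m+1..n}. tdeg p i n = j}"
    using assms by auto
  then show ?thesis unfolding Zcount_def by (simp add: card_Un_disjoint disjoint_iff)
qed

lemma Zcount_weighted_le_Psi:
  assumes "\<forall>k\<ge>1. 0 \<le> f k"
  shows "f j * real (Zcount p j n) \<le> Psi f p n"
proof -
  have "f j * real (Zcount p j n) = (\<Sum>i\<in>{1..n}. if tdeg p i n = j then f (tdeg p i n) else 0)"
    unfolding Zcount_eq_sum sum_distrib_left by (rule sum.cong) auto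
  also have "\<dots> \<le> Psi f p n"
    unfolding Psi_def using assms tdeg_ge_1 by (intro sum_mono) auto
  finally show ?thesis .
qed

definition degree_jump :: "nat \<Rightarrow> nat \<Rightarrow> (nat \<Rightarrow> nat) \<Rightarrow> nat \<Rightarrow> real" where
  "degree_jump k n p i = (if tdeg p i n = k - 1 then 1 else 0) - (if tdeg p i n = k then 1 else 0)"

lemma Zcount_Suc_diff:
  assumes k: "1 \<le> k"
  shows "real (Zcount p k (Suc n)) - real (Zcount p k n)
     = (if k = 1 then 1 else 0) + (\<Sum>i\<in>{1..n}. (if p (Suc n) = i then 1 else 0) * degree_jump k n p i)"
proof -
  have "real (Zcount p k (Suc n)) = (\<Sum>i\<in>{1..n}. if tdeg p i (Suc n) = k then 1 else 0) + (if k = 1 then 1 else 0)"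
    unfolding Zcount_eq_sum by (simp add: atLeastAtMostSuc_conv tdeg_def)
  moreover have "(if tdeg p i (Suc n) = k then 1 else 0) - (if tdeg p i n = k then 1 else 0)
      = (if p (Suc n) = i then 1 else 0) * degree_jump k n p i" if "i \<in> {1..n}" for i
    using that k tdeg_Suc[of i n p] tdeg_ge_1[of i n p] unfolding degree_jump_def by auto
  ultimately show ?thesis
    unfolding Zcount_eq_sum[of p k n] by (simp add: sum_subtractf[symmetric])
qed

lemma abs_degree_jump_le_1: "\<bar>degree_jump k n p i\<bar> \<le> 1"
  unfolding degree_jump_def by auto

lemma degree_jump_cong: "\<forall>l\<in>{i+1..n}. p l = q l \<Longrightarrow> degree_jump k n p i = degree_jump k n q i"
  unfolding degree_jump_def using tdeg_cong[of i n p q] by simp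

section \<open>The delayed attachment law\<close>

definition attach_at :: "(nat \<Rightarrow> real) \<Rightarrow> (nat \<Rightarrow> nat) \<Rightarrow> nat \<Rightarrow> nat \<Rightarrow> real" where
  "attach_at f p m i = (if 1 \<le> i \<and> i \<le> m then f (tdeg p i m) / Psi f p m else 0)"

lemma attach_prob_eq_attach_at: "attach_prob f \<beta> n p i x = attach_at f p (delay_time \<beta> n x) i"
  unfolding attach_prob_def attach_at_def Psi_def Let_def by simp

lemma tdeg_le_Psi:
  assumes "\<forall>k\<ge>1. 0 < f k" "1 \<le> i" "i \<le> m"
  shows "f (tdeg p i m) \<le> Psi f p m"
  unfolding Psi_def using assms tdeg_ge_1
  by (intro member_le_sum[of i "{1..m}" "\<lambda>u. f (tdeg p u m)"]) (auto simp: less_imp_le)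

lemma attach_at_nonneg: "\<forall>k\<ge>1. 0 < f k \<Longrightarrow> 0 \<le> attach_at f p m i"
  using tdeg_le_Psi[of f i m p] tdeg_ge_1[of i m p] unfolding attach_at_def by auto

lemma attach_at_le_1: "\<forall>k\<ge>1. 0 < f k \<Longrightarrow> attach_at f p m i \<le> 1"
  using tdeg_le_Psi[of f i m p] tdeg_ge_1[of i m p] unfolding attach_at_def by auto

lemma sum_attach_at:
  assumes f: "\<forall>k\<ge>1. 0 < f k" and m: "1 \<le> m" "m \<le> n"
  shows "(\<Sum>i\<in>{1..n}. attach_at f p m i) = 1"
proof -
  have Psi: "Psi f p m > 0" using Psi_pos[OF f m(1)] .
  have "(\<Sum>i\<in>{1..n}. attach_at f p m i) = (\<Sum>i\<in>{1..m}. f (tdeg p i m) / Psi f p m)"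
    using m by (intro sum.mono_neutral_cong_right) (auto simp: attach_at_def)
  also have "\<dots> = 1"
    using Psi unfolding sum_divide_distrib[symmetric] Psi_def by simp
  finally show ?thesis .
qed

lemma attach_at_cong:
  assumes agree: "\<forall>l\<in>{2..n}. p l = q l" and m: "m \<le> n"
  shows "attach_at f p m i = attach_at f q m i"
proof -
  have "tdeg p u m = tdeg q u m" if "1 \<le> u" for u
    using agree that m by (intro tdeg_cong) auto
  then show ?thesis unfolding attach_at_def using Psi_cong[OF agree m, of f] by simp
qed

text \<open>The probability that the parent chosen in \<open>T(m)\<close> has degree \<open>j\<close> in \<open>T(n)\<close>.\<close>
definition degree_mass :: "(nat \<Rightarrow> real) \<Rightarrow> (nat \<Rightarrow> nat) \<Rightarrow> nat \<Rightarrow> nat \<Rightarrow> nat \<Rightarrow> real" where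
  "degree_mass f p j m n = (\<Sum>i\<in>{1..n}. if tdeg p i n = j then attach_at f p m i else 0)"

lemma degree_mass_nonneg: "\<forall>k\<ge>1. 0 < f k \<Longrightarrow> 0 \<le> degree_mass f p j m n"
  unfolding degree_mass_def using attach_at_nonneg by (intro sum_nonneg) auto

lemma degree_mass_le_1:
  assumes "\<forall>k\<ge>1. 0 < f k" "1 \<le> m" "m \<le> n"
  shows "degree_mass f p j m n \<le> 1"
proof -
  have "degree_mass f p j m n \<le> (\<Sum>i\<in>{1..n}. attach_at f p m i)"
    unfolding degree_mass_def using attach_at_nonneg[OF assms(1)] by (intro sum_mono) auto
  then show ?thesis using sum_attach_at[OF assms] by simp
qed

lemma Zcount_ratio_bounds:
  assumes f: "\<forall>k\<ge>1. 0 < f k" and j: "1 \<le> j"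
  shows "0 \<le> f j * real (Zcount p j n) / Psi f p n" "f j * real (Zcount p j n) / Psi f p n \<le> 1"
proof -
  have Psi: "0 \<le> Psi f p n" unfolding Psi_def using f tdeg_ge_1 by (intro sum_nonneg) (auto simp: less_imp_le)
  have "0 < f j" using f j by simp
  then show "0 \<le> f j * real (Zcount p j n) / Psi f p n" using Psi by simp
  have "f j * real (Zcount p j n) \<le> Psi f p n"
    using f by (intro Zcount_weighted_le_Psi) (simp add: less_imp_le)
  then show "f j * real (Zcount p j n) / Psi f p n \<le> 1"
    using Psi by (cases "Psi f p n = 0") (simp_all add: divide_le_eq_1)
qed

definition almost_lipschitz :: "(nat \<Rightarrow> real) \<Rightarrow> real \<Rightarrow> real \<Rightarrow> bool" where
  "almost_lipschitz f \<delta> K \<longleftrightarrow>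
     (\<forall>d d'. 1 \<le> d \<longrightarrow> d \<le> d' \<longrightarrow> \<bar>f d' - f d\<bar> \<le> \<delta> * real d' + K * (real d' - real d))"

lemma Psi_growth_le:
  assumes f: "\<forall>k\<ge>1. 0 \<le> f k" "\<forall>k\<ge>1. f k \<le> C * real k" and L: "almost_lipschitz f \<delta> K"
    and \<delta>: "0 \<le> \<delta>" and K: "0 \<le> K" and m: "m \<le> n"
  shows "\<bar>Psi f p n - Psi f p m\<bar> \<le> 2 * \<delta> * real n + (K + 2 * C) * (real n - real m)"
proof -
  define A where "A = (\<Sum>i\<in>{1..m}. f (tdeg p i n) - f (tdeg p i m))"
  define B where "B = (\<Sum>i\<in>{m+1..n}. f (tdeg p i n))"
  have "{1..n} = {1..m} \<union> {m+1..n}" using m by auto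
  then have "Psi f p n = (\<Sum>i\<in>{1..m}. f (tdeg p i n)) + B"
    unfolding Psi_def B_def by (simp add: sum.union_disjoint)
  then have split: "Psi f p n - Psi f p m = A + B" unfolding A_def Psi_def by (simp add: sum_subtractf)
  have "(\<Sum>i\<in>{1..m}. real (tdeg p i n)) \<le> (\<Sum>i\<in>{0+1..n}. real (tdeg p i n))"
    using m by (intro sum_mono2) auto
  then have handshake: "(\<Sum>i\<in>{1..m}. real (tdeg p i n)) \<le> 2 * real n"
    using sum_tdeg_tail_le[of 0 n p] by simp
  have "\<bar>A\<bar> \<le> (\<Sum>i\<in>{1..m}. \<delta> * real (tdeg p i n) + K * (real (tdeg p i n) - real (tdeg p i m)))"
    unfolding A_def
  proof (intro order_trans[OF sum_abs] sum_mono)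
    fix i assume "i \<in> {1..m}"
    then have "1 \<le> tdeg p i m" "tdeg p i m \<le> tdeg p i n"
      using tdeg_ge_1[of i m p] tdeg_mono[of i m n p] m by auto
    then show "\<bar>f (tdeg p i n) - f (tdeg p i m)\<bar>
        \<le> \<delta> * real (tdeg p i n) + K * (real (tdeg p i n) - real (tdeg p i m))"
      using L unfolding almost_lipschitz_def by blast
  qed
  also have "\<dots> = \<delta> * (\<Sum>i\<in>{1..m}. real (tdeg p i n)) + K * (\<Sum>i\<in>{1..m}. real (tdeg p i n) - real (tdeg p i m))"
    by (simp add: sum.distrib sum_distrib_left)
  also have "\<dots> \<le> \<delta> * (2 * real n) + K * (real n - real m)"
    using handshake sum_tdeg_growth_le[OF m, of p] \<delta> K by (intro add_mono mult_left_mono) auto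
  finally have A_le: "\<bar>A\<bar> \<le> 2 * \<delta> * real n + K * (real n - real m)" by simp
  have B_nonneg: "0 \<le> B" unfolding B_def using f tdeg_ge_1 by (intro sum_nonneg) auto
  have "C \<ge> 0" using f by (metis order_refl mult.right_neutral of_nat_1 order_trans)
  have "B \<le> (\<Sum>i\<in>{m+1..n}. C * real (tdeg p i n))"
    unfolding B_def using f tdeg_ge_1 by (intro sum_mono) auto
  also have "\<dots> \<le> C * (2 * (real n - real m))"
    using sum_tdeg_tail_le[OF m, of p] \<open>C \<ge> 0\<close> by (simp add: sum_distrib_left[symmetric] mult_left_mono)
  finally have "B \<le> 2 * C * (real n - real m)" by (simp add: algebra_simps)
  then show ?thesis using split A_le B_nonneg by (simp add: algebra_simps)
qed

text \<open>Vertices of \<open>T(m)\<close> whose degree still equals \<open>j\<close> at time \<open>n\<close>; their degree at time \<open>m\<close>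
  can only differ from \<open>j\<close> by the at most \<open>n - m\<close> children acquired in between.\<close>
lemma degree_mass_stale_le:
  assumes f: "\<forall>k\<ge>1. 0 < f k" and Fj: "\<forall>d\<in>{1..j}. f d \<le> Fj"
    and j: "1 \<le> j" and m: "1 \<le> m" "m \<le> n"
  shows "\<bar>degree_mass f p j m n - f j * real (card {i\<in>{1..m}. tdeg p i n = j}) / Psi f p m\<bar>
         \<le> Fj * (real n - real m) / Psi f p m"
proof -
  define g where "g i = (if tdeg p i n = j then f (tdeg p i m) - f j else 0)" for i
  have Psi: "Psi f p m > 0" using Psi_pos[OF f m(1)] .
  have "degree_mass f p j m n = (\<Sum>i\<in>{1..m}. if tdeg p i n = j then f (tdeg p i m) else 0) / Psi f p m"
    unfolding degree_mass_def sum_divide_distrib using m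
    by (intro sum.mono_neutral_cong_right) (auto simp: attach_at_def)
  moreover have "f j * real (card {i\<in>{1..m}. tdeg p i n = j}) = (\<Sum>i\<in>{1..m}. if tdeg p i n = j then f j else 0)"
    by (simp add: sum.If_cases Int_def conj_commute)
  ultimately have diff: "degree_mass f p j m n - f j * real (card {i\<in>{1..m}. tdeg p i n = j}) / Psi f p m
      = (\<Sum>i\<in>{1..m}. g i) / Psi f p m"
    unfolding g_def by (simp add: diff_divide_distrib[symmetric] sum_subtractf[symmetric] if_distrib
        cong: if_cong)
  have "f 1 \<le> Fj" "0 < f 1" using Fj f j by auto
  then have Fj_nonneg: "0 \<le> Fj" by linarith
  have g_le: "\<bar>g i\<bar> \<le> Fj * (real (tdeg p i n) - real (tdeg p i m))" if i: "i \<in> {1..m}" for i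
  proof -
    have mono: "tdeg p i m \<le> tdeg p i n" and pos: "1 \<le> tdeg p i m"
      using tdeg_mono[of i m n p] tdeg_ge_1[of i m p] i m by auto
    consider "tdeg p i n \<noteq> j" | "tdeg p i m = j" | "tdeg p i n = j" "tdeg p i m < j"
      using mono by linarith
    then show ?thesis
    proof cases
      case 3
      then have "f (tdeg p i m) \<le> Fj" "f j \<le> Fj" "0 < f (tdeg p i m)" "0 < f j"
        using Fj f pos j by auto
      then have "\<bar>g i\<bar> \<le> Fj" using 3 unfolding g_def by simp
      also have "\<dots> \<le> Fj * (real (tdeg p i n) - real (tdeg p i m))"
        using 3 Fj_nonneg by (simp add: mult_le_cancel_left1)
      finally show ?thesis .
    qed (use mono Fj_nonneg in \<open>auto simp: g_def\<close>)
  qed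
  have "\<bar>\<Sum>i\<in>{1..m}. g i\<bar> \<le> (\<Sum>i\<in>{1..m}. Fj * (real (tdeg p i n) - real (tdeg p i m)))"
    using g_le by (intro order_trans[OF sum_abs] sum_mono)
  also have "\<dots> \<le> Fj * (real n - real m)"
    using sum_tdeg_growth_le[OF m(2), of p] Fj_nonneg by (simp add: sum_distrib_left[symmetric] mult_left_mono)
  finally show ?thesis unfolding diff using Psi by (simp add: divide_right_mono)
qed

lemma ratio_shift_le:
  fixes fs Pm Pn U Z m n a b :: real
  assumes fs: "0 < fs" and m: "0 < m" "m \<le> n" and Pm: "fs * m \<le> Pm" and Pn: "fs * n \<le> Pn"
    and U: "0 \<le> U" "U \<le> m" "U \<le> Z" "Z - U \<le> n - m"
    and growth: "\<bar>Pn - Pm\<bar> \<le> a * n + b * (n - m)" and b: "0 \<le> b"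
  shows "\<bar>U / Pm - Z / Pn\<bar> \<le> a / fs\<^sup>2 + (b / fs\<^sup>2 + 1 / fs) * ((n - m) / m)"
proof -
  have "0 < fs * m" "0 < fs * n" using fs m by simp_all
  then have Pm0: "0 < Pm" and Pn0: "0 < Pn" using Pm Pn by linarith+
  have ratio: "(n - m) / n \<le> (n - m) / m" using m by (intro divide_left_mono) auto
  have "U / Pm \<le> m / (fs * m)"
    using U fs m Pm by (intro frac_le) auto
  then have U_Pm: "U / Pm \<le> 1 / fs" using m by simp
  have "U / Pm - U / Pn = U / Pm * ((Pn - Pm) / Pn)"
    using Pm0 Pn0 by (simp add: field_simps)
  then have "\<bar>U / Pm - U / Pn\<bar> = U / Pm * (\<bar>Pn - Pm\<bar> / Pn)"
    using U Pm0 Pn0 by (simp add: abs_mult)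
  also have "\<dots> \<le> 1 / fs * ((a * n + b * (n - m)) / (fs * n))"
  proof (rule mult_mono[OF U_Pm])
    show "\<bar>Pn - Pm\<bar> / Pn \<le> (a * n + b * (n - m)) / (fs * n)"
      using Pn Pn0 fs m growth by (intro frac_le) (auto intro: order_trans[OF abs_ge_zero])
  qed (use fs Pn0 in auto)
  also have "\<dots> = a / fs\<^sup>2 + b / fs\<^sup>2 * ((n - m) / n)"
    using fs m by (simp add: field_simps power2_eq_square)
  also have "\<dots> \<le> a / fs\<^sup>2 + b / fs\<^sup>2 * ((n - m) / m)"
    using ratio fs b by (intro add_left_mono mult_left_mono) auto
  finally have old: "\<bar>U / Pm - U / Pn\<bar> \<le> a / fs\<^sup>2 + b / fs\<^sup>2 * ((n - m) / m)" .
  have "\<bar>(Z - U) / Pn\<bar> \<le> (n - m) / Pn" using U Pn0 by (simp add: divide_right_mono)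
  also have "\<dots> \<le> (n - m) / (fs * n)"
    using Pn Pn0 fs m by (intro divide_left_mono) (auto intro!: mult_pos_pos)
  also have "\<dots> = 1 / fs * ((n - m) / n)" by simp
  also have "\<dots> \<le> 1 / fs * ((n - m) / m)"
    using ratio fs by (intro mult_left_mono) auto
  finally have new: "\<bar>(Z - U) / Pn\<bar> \<le> 1 / fs * ((n - m) / m)" .
  have "U / Pm - Z / Pn = (U / Pm - U / Pn) - (Z - U) / Pn" by (simp add: diff_divide_distrib)
  then have "\<bar>U / Pm - Z / Pn\<bar> \<le> \<bar>U / Pm - U / Pn\<bar> + \<bar>(Z - U) / Pn\<bar>"
    by (metis abs_triangle_ineq4)
  also have "\<dots> \<le> a / fs\<^sup>2 + b / fs\<^sup>2 * ((n - m) / m) + 1 / fs * ((n - m) / m)"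
    using old new by linarith
  also have "\<dots> = a / fs\<^sup>2 + (b / fs\<^sup>2 + 1 / fs) * ((n - m) / m)"
    by (simp only: distrib_right add.assoc)
  finally show ?thesis .
qed

lemma degree_mass_approx:
  assumes fs: "0 < fs" "\<forall>k\<ge>1. fs \<le> f k" and C: "\<forall>k\<ge>1. f k \<le> C * real k"
    and L: "almost_lipschitz f \<delta> K" and \<delta>: "0 \<le> \<delta>" and K: "0 \<le> K"
    and Fj: "\<forall>d\<in>{1..j}. f d \<le> Fj" and j: "1 \<le> j" and m: "1 \<le> m" "m \<le> n"
  shows "\<bar>degree_mass f p j m n - f j * real (Zcount p j n) / Psi f p n\<bar>
         \<le> (Fj / fs + f j * (K + 2 * C) / fs\<^sup>2 + f j / fs) * ((real n - real m) / real m)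
            + 2 * f j / fs\<^sup>2 * \<delta>"
proof -
  define U where "U = real (card {i\<in>{1..m}. tdeg p i n = j})"
  define Z where "Z = real (Zcount p j n)"
  define r where "r = (real n - real m) / real m"
  have f_pos: "\<forall>k\<ge>1. 0 < f k" using fs by (auto intro: less_le_trans)
  have f_nonneg: "\<forall>k\<ge>1. 0 \<le> f k" using f_pos by (simp add: less_imp_le)
  have fj: "0 < f j" using f_pos j by simp
  have "f 1 \<le> Fj" "0 < f 1" using Fj f_pos j by auto
  then have Fj_nonneg: "0 \<le> Fj" by linarith
  have C0: "0 \<le> C" using fs C by (metis order_refl mult.right_neutral of_nat_1 order_trans less_imp_le)
  have m0: "0 < real m" and mn: "real m \<le> real n" using m by auto
  have "card {i\<in>{1..m}. tdeg p i n = j} \<le> card {1..m}"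
    and "card {i\<in>{m+1..n}. tdeg p i n = j} \<le> card {m+1..n}" by (intro card_mono; auto)+
  then have U: "0 \<le> U" "U \<le> real m" "U \<le> Z" "Z - U \<le> real n - real m"
    using Zcount_split[OF m(2), of p j] m(2) unfolding U_def Z_def by auto
  have Pm: "fs * real m \<le> Psi f p m" and Pn: "fs * real n \<le> Psi f p n"
    using Psi_ge[OF fs(2)] by auto
  have "\<bar>degree_mass f p j m n - f j * U / Psi f p m\<bar> \<le> Fj * (real n - real m) / Psi f p m"
    unfolding U_def by (rule degree_mass_stale_le[OF f_pos Fj j m])
  also have "\<dots> \<le> Fj * (real n - real m) / (fs * real m)"
    using Fj_nonneg Pm Psi_pos[OF f_pos m(1)] fs m0 mn by (intro divide_left_mono) auto
  finally have stale: "\<bar>degree_mass f p j m n - f j * U / Psi f p m\<bar> \<le> Fj / fs * r"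
    by (simp add: r_def)
  have "\<bar>f j * U / Psi f p m - f j * Z / Psi f p n\<bar> = f j * \<bar>U / Psi f p m - Z / Psi f p n\<bar>"
    using fj by (simp add: abs_mult flip: right_diff_distrib times_divide_eq_right)
  also have "\<dots> \<le> f j * (2 * \<delta> / fs\<^sup>2 + ((K + 2 * C) / fs\<^sup>2 + 1 / fs) * r)"
    using ratio_shift_le[OF fs(1) m0 mn Pm Pn U Psi_growth_le[OF f_nonneg C L \<delta> K m(2)]] fj K C0
    unfolding r_def by (intro mult_left_mono) auto
  finally have shift: "\<bar>f j * U / Psi f p m - f j * Z / Psi f p n\<bar>
      \<le> f j * (2 * \<delta> / fs\<^sup>2 + ((K + 2 * C) / fs\<^sup>2 + 1 / fs) * r)" .
  have "\<bar>degree_mass f p j m n - f j * Z / Psi f p n\<bar>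
      \<le> Fj / fs * r + f j * (2 * \<delta> / fs\<^sup>2 + ((K + 2 * C) / fs\<^sup>2 + 1 / fs) * r)"
    using stale shift abs_triangle_ineq[of "degree_mass f p j m n - f j * U / Psi f p m"
        "f j * U / Psi f p m - f j * Z / Psi f p n"] by simp
  also have "\<dots> = (Fj / fs + f j * (K + 2 * C) / fs\<^sup>2 + f j / fs) * r + 2 * f j / fs\<^sup>2 * \<delta>"
  proof -
    \<comment> \<open>generalised over \<open>fj\<close>: normalising with the term \<open>f j\<close> in place is much slower\<close>
    have "Fj / fs * r + fj * (2 * \<delta> / fs\<^sup>2 + ((K + 2 * C) / fs\<^sup>2 + 1 / fs) * r)
        = (Fj / fs + fj * (K + 2 * C) / fs\<^sup>2 + fj / fs) * r + 2 * fj / fs\<^sup>2 * \<delta>" for fj :: real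
      by (simp add: algebra_simps)
    then show ?thesis .
  qed
  finally show ?thesis unfolding Z_def r_def .
qed

section \<open>Regularity of the attachment function\<close>

lemma assumption1_pos: "assumption1 f \<Longrightarrow> \<forall>k\<ge>1. 0 < f k"
  unfolding assumption1_def by blast

lemma assumption1_lower_bound:
  assumes "assumption1 f"
  shows "\<exists>fs>0. \<forall>k\<ge>1. fs \<le> f k"
proof -
  have "bdd_below (f ` {1..})"
    using assumption1_pos[OF assms] by (intro bdd_belowI[of _ 0]) (auto simp: less_imp_le)
  then have "\<forall>k\<ge>1. (INF k\<in>{1..}. f k) \<le> f k" by (auto intro: cINF_lower)
  moreover have "(INF k\<in>{1..}. f k) > 0" using assms unfolding assumption1_def by blast
  ultimately show ?thesis by blast
qed

lemma assumption1_linear_bound: "assumption1 f \<Longrightarrow> \<exists>C. \<forall>k\<ge>1. f k \<le> C * real k"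
  unfolding assumption1_def by blast

lemma almost_lipschitz_of_lipschitz:
  assumes L: "\<forall>j\<ge>1. \<forall>k\<ge>1. \<bar>f j - f k\<bar> \<le> L * \<bar>real j - real k\<bar>" and \<delta>: "0 \<le> \<delta>"
  shows "almost_lipschitz f \<delta> \<bar>L\<bar>"
  unfolding almost_lipschitz_def
proof (intro allI impI)
  fix d d' :: nat assume d: "1 \<le> d" "d \<le> d'"
  then have "\<bar>f d' - f d\<bar> \<le> L * \<bar>real d' - real d\<bar>" using L order_trans by blast
  also have "\<dots> \<le> \<bar>L\<bar> * (real d' - real d)" using d by (simp add: mult_right_mono)
  finally show "\<bar>f d' - f d\<bar> \<le> \<delta> * real d' + \<bar>L\<bar> * (real d' - real d)"
    using \<delta> by (simp add: add_increasing)
qed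

text \<open>Below some threshold \<open>N\<close> the increment is paid for by \<open>K = \<Sum>k\<le>N. f k\<close>, above it the
  increment is at most \<open>f d' \<le> \<delta> d'\<close>.\<close>
lemma almost_lipschitz_of_sublinear_mono:
  assumes pos: "\<forall>k\<ge>1. 0 < f k" and lim: "(\<lambda>k. f k / real k) \<longlonglongrightarrow> 0"
    and mono: "mono_on {1..} f" and \<delta>: "0 < \<delta>"
  shows "\<exists>K\<ge>0. almost_lipschitz f \<delta> K"
proof -
  obtain N where N: "\<And>k. k \<ge> N \<Longrightarrow> \<bar>f k / real k\<bar> < \<delta>"
    using LIMSEQ_D[OF lim \<delta>] by auto
  define K where "K = (\<Sum>k\<in>{1..N}. f k)"
  have K: "0 \<le> K" unfolding K_def using pos by (intro sum_nonneg) (auto simp: less_imp_le)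
  have small: "f k \<le> K" if "1 \<le> k" "k \<le> N" for k
    unfolding K_def using that pos by (intro member_le_sum) (auto simp: less_imp_le)
  have "almost_lipschitz f \<delta> K"
    unfolding almost_lipschitz_def
  proof (intro allI impI)
    fix d d' :: nat assume d: "1 \<le> d" "d \<le> d'"
    have "f d \<le> f d'" using mono d by (auto intro: mono_onD)
    moreover have "0 < f d" using pos d by simp
    ultimately have "\<bar>f d' - f d\<bar> \<le> f d'" by simp
    moreover have "f d' \<le> \<delta> * real d' + K * (real d' - real d)" if "d < d'"
    proof (cases "N \<le> d'")
      case True
      then have "f d' \<le> \<delta> * real d'" using N[of d'] d by (simp add: abs_less_iff field_simps)
      then show ?thesis using K that by (simp add: add_increasing2)
    next
      case False
      then have "f d' \<le> K" using small d by simp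
      also have "\<dots> \<le> K * (real d' - real d)" using K that by (simp add: mult_le_cancel_left1)
      finally show ?thesis using \<delta> by (simp add: add_increasing)
    qed
    ultimately show "\<bar>f d' - f d\<bar> \<le> \<delta> * real d' + K * (real d' - real d)"
      using d \<delta> K by (cases "d = d'") auto
  qed
  then show ?thesis using K by blast
qed

lemma assumption2_almost_lipschitz:
  assumes a1: "assumption1 f" and a2: "assumption2 \<beta> \<mu> f" and \<delta>: "0 < \<delta>"
  shows "\<exists>K\<ge>0. almost_lipschitz f \<delta> K"
proof -
  consider (affine) \<alpha> where "\<forall>k\<ge>1. f k = real k + \<alpha>"
    | (lipschitz) L where "\<forall>j\<ge>1. \<forall>k\<ge>1. \<bar>f j - f k\<bar> \<le> L * \<bar>real j - real k\<bar>"
    | (mono) "(\<lambda>k. f k / real k) \<longlonglongrightarrow> 0" "mono_on {1..} f"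
    using a2 unfolding assumption2_def by blast
  then show ?thesis
  proof cases
    case affine
    then have "\<forall>j\<ge>1. \<forall>k\<ge>1. \<bar>f j - f k\<bar> \<le> 1 * \<bar>real j - real k\<bar>" by simp
    from almost_lipschitz_of_lipschitz[OF this] \<delta> show ?thesis
      by (intro exI[of _ 1]) simp
  next
    case lipschitz
    from almost_lipschitz_of_lipschitz[OF this] \<delta> show ?thesis
      by (intro exI[of _ "\<bar>L\<bar>"]) simp
  next
    case mono
    then show ?thesis by (rule almost_lipschitz_of_sublinear_mono[OF assumption1_pos[OF a1] _ _ \<delta>])
  qed
qed

lemma delay_time_bounds:
  assumes "0 \<le> x" "1 \<le> n"
  shows "1 \<le> delay_time \<beta> n x" "delay_time \<beta> n x \<le> n"
proof -
  have "\<lfloor>real n - real n powr \<beta> * x\<rfloor> \<le> \<lfloor>real n\<rfloor>" using assms by (intro floor_mono) simp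
  then show "delay_time \<beta> n x \<le> n" using assms
    unfolding delay_time_def floor_plus_def by (simp add: nat_le_iff)
  show "1 \<le> delay_time \<beta> n x" unfolding delay_time_def floor_plus_def by simp
qed

lemma delay_time_gt: "real n - real n powr \<beta> * x - 1 < real (delay_time \<beta> n x)"
  unfolding delay_time_def floor_plus_def by linarith

lemma measurable_delay_time: "delay_time \<beta> n \<in> measurable borel (count_space UNIV)"
  unfolding delay_time_def[abs_def] floor_plus_def by measurable

lemma measurable_delay_time_comp:
  "sets M = sets borel \<Longrightarrow> (\<lambda>x. g (delay_time \<beta> n x) :: real) \<in> borel_measurable M"
  using measurable_compose[OF measurable_delay_time, of "\<lambda>m. g m"]
  by (simp cong: measurable_cong_sets)

lemma delay_ratio_tendsto_0:
  assumes \<beta>: "\<beta> < 1" and x: "0 \<le> x"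
  shows "(\<lambda>n. (real n - real (delay_time \<beta> n x)) / real (delay_time \<beta> n x)) \<longlonglongrightarrow> 0"
proof -
  define r where "r n = (real n - real (delay_time \<beta> n x)) / real (delay_time \<beta> n x)" for n
  define q where "q n = (real n powr \<beta> * x + 1) / real n" for n :: nat
  have "(\<lambda>n. real n powr (\<beta> - 1)) \<longlonglongrightarrow> 0"
    using \<beta> by (intro tendsto_neg_powr filterlim_real_sequentially) auto
  then have "(\<lambda>n. x * real n powr (\<beta> - 1) + 1 / real n) \<longlonglongrightarrow> x * 0 + 0"
    by (intro tendsto_intros)
  moreover have "\<forall>\<^sub>F n in sequentially. x * real n powr (\<beta> - 1) + 1 / real n = q n"
    using eventually_gt_at_top[of 0]
    by eventually_elim (simp add: q_def powr_diff add_divide_distrib)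
  ultimately have q: "q \<longlonglongrightarrow> 0" by (simp add: tendsto_cong)
  have "\<forall>\<^sub>F n in sequentially. 0 \<le> r n \<and> r n \<le> 2 * q n"
    using order_tendstoD(2)[OF q, of "1/2", simplified] eventually_ge_at_top[of 1]
  proof eventually_elim
    case (elim n)
    define m where "m = real (delay_time \<beta> n x)"
    have qn: "q n * real n = real n powr \<beta> * x + 1" using elim unfolding q_def by simp
    have gap: "real n - m < q n * real n" using delay_time_gt[of n \<beta> x] qn unfolding m_def by simp
    have "q n * real n < real n / 2" using elim by (simp add: mult_strict_right_mono)
    then have m_half: "real n < 2 * m" using gap by simp
    have "0 \<le> q n" unfolding q_def using x by simp
    then have "q n * real n \<le> q n * (2 * m)" using m_half by (intro mult_left_mono) auto
    then have "real n - m \<le> 2 * q n * m" using gap by simp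
    moreover have "m \<le> real n" "0 < m" using delay_time_bounds[OF x elim(2), of \<beta>] unfolding m_def by auto
    ultimately show ?case unfolding r_def m_def[symmetric] by (simp add: pos_divide_le_eq)
  qed
  then have lower: "\<forall>\<^sub>F n in sequentially. 0 \<le> r n"
    and upper: "\<forall>\<^sub>F n in sequentially. r n \<le> 2 * q n"
    by (simp_all add: eventually_conj_iff)
  have "(\<lambda>n. 2 * q n) \<longlonglongrightarrow> 0" using tendsto_mult_right_zero[OF q] by simp
  from tendsto_sandwich[OF lower upper tendsto_const this] have "r \<longlonglongrightarrow> 0" .
  then show ?thesis unfolding r_def .
qed

lemma integral_min_1_tendsto_0:
  fixes g :: "nat \<Rightarrow> 'a \<Rightarrow> real"
  assumes "finite_measure M" "\<And>n. g n \<in> borel_measurable M" "AE x in M. (\<lambda>n. g n x) \<longlonglongrightarrow> 0"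
  shows "(\<lambda>n. \<integral>x. min 1 \<bar>g n x\<bar> \<partial>M) \<longlonglongrightarrow> 0"
proof -
  have "(\<lambda>n. \<integral>x. min 1 \<bar>g n x\<bar> \<partial>M) \<longlonglongrightarrow> (\<integral>x. 0 \<partial>M)"
  proof (rule integral_dominated_convergence[where w = "\<lambda>_. 1"])
    show "AE x in M. (\<lambda>n. min 1 \<bar>g n x\<bar>) \<longlonglongrightarrow> 0"
      using assms(3) by eventually_elim (auto intro: tendsto_eq_intros)
  qed (use assms finite_measure.integrable_const[OF assms(1)] in auto)
  then show ?thesis by simp
qed

lemma AE_L1_tendsto_0_of_uniform_bound:
  fixes X b :: "nat \<Rightarrow> 'a \<Rightarrow> real"
  assumes M: "prob_space M" and bound: "AE \<omega> in M. \<forall>n\<ge>N. \<bar>X n \<omega>\<bar> \<le> b n \<omega>"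
    and b: "uniform_limit UNIV b (\<lambda>_. 0) sequentially"
  shows "(AE \<omega> in M. (\<lambda>n. X n \<omega>) \<longlonglongrightarrow> 0) \<and> (\<lambda>n. \<integral>\<omega>. \<bar>X n \<omega>\<bar> \<partial>M) \<longlonglongrightarrow> 0"
proof
  interpret prob_space M by (rule M)
  show "AE \<omega> in M. (\<lambda>n. X n \<omega>) \<longlonglongrightarrow> 0"
    using bound
  proof eventually_elim
    case (elim \<omega>)
    then have "\<forall>\<^sub>F n in sequentially. norm (X n \<omega>) \<le> b n \<omega>"
      by (auto simp: eventually_sequentially)
    then show ?case using tendsto_uniform_limitI[OF b] by (rule Lim_null_comparison) simp
  qed
  show "(\<lambda>n. \<integral>\<omega>. \<bar>X n \<omega>\<bar> \<partial>M) \<longlonglongrightarrow> 0"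
  proof (rule tendstoI)
    fix e :: real assume e: "0 < e"
    show "\<forall>\<^sub>F n in sequentially. dist (\<integral>\<omega>. \<bar>X n \<omega>\<bar> \<partial>M) 0 < e"
      using uniform_limitD[OF b half_gt_zero[OF e]] eventually_ge_at_top[of N]
    proof eventually_elim
      case (elim n)
      note small = elim(1) and late = elim(2)
      have "AE \<omega> in M. \<bar>X n \<omega>\<bar> \<le> e / 2"
        using bound
      proof eventually_elim
        case (elim \<omega>)
        have "\<bar>b n \<omega>\<bar> < e / 2" using small by (simp add: dist_real_def)
        moreover have "\<bar>X n \<omega>\<bar> \<le> b n \<omega>" using elim late by blast
        ultimately show ?case using abs_ge_self[of "b n \<omega>"] by linarith
      qed
      then have "(\<integral>\<omega>. \<bar>X n \<omega>\<bar> \<partial>M) \<le> (\<integral>\<omega>. e / 2 \<partial>M)"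
        using e by (intro integral_mono_AE') auto
      then show ?case using e by (simp add: prob_space)
    qed
  qed
qed

lemma measurable_parent_functional:
  fixes par :: "nat \<Rightarrow> 'a \<Rightarrow> nat" and \<Phi> :: "(nat \<Rightarrow> nat) \<Rightarrow> 'b"
  assumes L: "finite L" and gen: "\<And>l i. l \<in> L \<Longrightarrow> par l -` {i} \<inter> space N \<in> sets N"
    and local: "\<And>p q. \<forall>l\<in>L. p l = q l \<Longrightarrow> \<Phi> p = \<Phi> q"
  shows "(\<lambda>\<omega>. \<Phi> (\<lambda>l. par l \<omega>)) \<in> measurable N (count_space UNIV)"
proof -
  define g where "g \<omega> = restrict (\<lambda>l. par l \<omega>) L" for \<omega>
  have countable: "countable (PiE L (\<lambda>_. UNIV :: nat set))" using L by (intro countable_PiE) auto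
  have "g -` {a} \<inter> space N = space N \<inter> (\<Inter>l\<in>L. par l -` {a l} \<inter> space N)" if "a \<in> PiE L (\<lambda>_. UNIV)" for a
    using that by (auto simp: g_def fun_eq_iff PiE_def extensional_def)
  moreover have "space N \<inter> (\<Inter>l\<in>L. par l -` {a l} \<inter> space N) \<in> sets N" for a
  proof (cases "L = {}")
    case False
    then have "(\<Inter>l\<in>L. par l -` {a l} \<inter> space N) \<in> sets N" using L gen by (intro sets.finite_INT) auto
    then show ?thesis by (intro sets.Int sets.top)
  qed simp
  ultimately have "g \<in> measurable N (count_space (PiE L (\<lambda>_. UNIV)))"
    unfolding measurable_count_space_eq_countable[OF countable] by (auto simp: g_def)
  then have "(\<lambda>\<omega>. \<Phi> (g \<omega>)) \<in> measurable N (count_space UNIV)"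
    by (rule measurable_compose) simp
  moreover have "\<Phi> (g \<omega>) = \<Phi> (\<lambda>l. par l \<omega>)" for \<omega> by (rule local) (simp add: g_def)
  ultimately show ?thesis by simp
qed

section \<open>Mean errors of the delayed attachment law\<close>

definition degree_error :: "(nat \<Rightarrow> real) \<Rightarrow> real \<Rightarrow> nat \<Rightarrow> (nat \<Rightarrow> nat) \<Rightarrow> nat \<Rightarrow> real \<Rightarrow> real" where
  "degree_error f \<beta> n p j x =
     degree_mass f p j (delay_time \<beta> n x) n - f j * real (Zcount p j n) / Psi f p n"

lemma abs_degree_error_le_1:
  assumes "\<forall>k\<ge>1. 0 < f k" "1 \<le> j" "0 \<le> x" "1 \<le> n"
  shows "\<bar>degree_error f \<beta> n p j x\<bar> \<le> 1"
proof -
  have "0 \<le> degree_mass f p j (delay_time \<beta> n x) n" "degree_mass f p j (delay_time \<beta> n x) n \<le> 1"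
    using degree_mass_nonneg[OF assms(1)] degree_mass_le_1[OF assms(1) delay_time_bounds[OF assms(3,4)]]
    by auto
  then show ?thesis using Zcount_ratio_bounds[OF assms(1,2), of p n]
    unfolding degree_error_def by linarith
qed

definition mean_attach_prob :: "real measure \<Rightarrow> (nat \<Rightarrow> real) \<Rightarrow> real \<Rightarrow> nat \<Rightarrow> (nat \<Rightarrow> nat) \<Rightarrow> nat \<Rightarrow> real" where
  "mean_attach_prob \<mu> f \<beta> n p i = (\<integral>x. attach_prob f \<beta> n p i x \<partial>\<mu>)"

definition drift :: "real measure \<Rightarrow> (nat \<Rightarrow> real) \<Rightarrow> real \<Rightarrow> nat \<Rightarrow> nat \<Rightarrow> (nat \<Rightarrow> nat) \<Rightarrow> real" where
  "drift \<mu> f \<beta> k n p =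
     (if k = 1 then 1 else 0) + (\<Sum>i\<in>{1..n}. degree_jump k n p i * mean_attach_prob \<mu> f \<beta> n p i)"

locale delayed_attachment = \<mu>: prob_space \<mu>
  for \<mu> :: "real measure" +
  fixes \<beta> :: real and f :: "nat \<Rightarrow> real"
  assumes sets_\<mu>: "sets \<mu> = sets borel" and delay_nonneg: "AE x in \<mu>. 0 \<le> x"
    and \<beta>_lt_1: "\<beta> < 1" and assumption1: "assumption1 f" and assumption2: "assumption2 \<beta> \<mu> f"
begin

lemma f_pos: "\<forall>k\<ge>1. 0 < f k"
  using assumption1_pos[OF assumption1] .

lemma degree_error_le:
  assumes j: "1 \<le> j" and \<epsilon>: "0 < \<epsilon>"
  obtains A where "\<And>n p x. 0 \<le> x \<Longrightarrow> 1 \<le> n \<Longrightarrow> \<bar>degree_error f \<beta> n p j x\<bar>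
    \<le> min 1 \<bar>A * ((real n - real (delay_time \<beta> n x)) / real (delay_time \<beta> n x))\<bar> + \<epsilon>"
proof -
  obtain fs where fs: "0 < fs" "\<forall>k\<ge>1. fs \<le> f k" using assumption1_lower_bound[OF assumption1] by blast
  obtain C where C: "\<forall>k\<ge>1. f k \<le> C * real k" using assumption1_linear_bound[OF assumption1] by blast
  define Fj where "Fj = (\<Sum>d\<in>{1..j}. f d)"
  have Fj: "\<forall>d\<in>{1..j}. f d \<le> Fj"
    unfolding Fj_def using f_pos by (auto intro!: member_le_sum simp: less_imp_le)
  define B where "B = 2 * f j / fs\<^sup>2"
  have B: "0 \<le> B" unfolding B_def using f_pos j by (simp add: less_imp_le)
  define \<delta> where "\<delta> = \<epsilon> / (B + 1)"
  have \<delta>: "0 < \<delta>" "0 \<le> B * \<delta>" "B * \<delta> \<le> \<epsilon>"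
    unfolding \<delta>_def using \<epsilon> B by (auto simp: field_simps)
  obtain K where K: "0 \<le> K" "almost_lipschitz f \<delta> K"
    using assumption2_almost_lipschitz[OF assumption1 assumption2 \<delta>(1)] by blast
  show ?thesis
  proof (rule that)
    fix n :: nat and p and x :: real assume x: "0 \<le> x" and n: "1 \<le> n"
    define r where "r = (Fj / fs + f j * (K + 2 * C) / fs\<^sup>2 + f j / fs)
        * ((real n - real (delay_time \<beta> n x)) / real (delay_time \<beta> n x))"
    have "\<bar>degree_error f \<beta> n p j x\<bar> \<le> r + B * \<delta>"
      using degree_mass_approx[OF fs C K(2) less_imp_le[OF \<delta>(1)] K(1) Fj j delay_time_bounds[OF x n]]
      unfolding degree_error_def r_def B_def by (simp add: mult.commute)
    moreover have "\<bar>degree_error f \<beta> n p j x\<bar> \<le> 1" by (rule abs_degree_error_le_1[OF f_pos j x n])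
    ultimately show "\<bar>degree_error f \<beta> n p j x\<bar> \<le> min 1 \<bar>r\<bar> + \<epsilon>"
      using \<delta> abs_ge_self[of r] unfolding min_def by auto
  qed
qed

text \<open>Dominated convergence for the ratio \<open>(n - m)/m\<close> between the present and the delayed time,
  which tends to 0 for every \<open>\<xi> \<ge> 0\<close>; the crude bound 1 caps the error uniformly.\<close>
lemma uniform_limit_integral_degree_error:
  assumes j: "1 \<le> j"
  shows "uniform_limit UNIV (\<lambda>n p. \<integral>x. \<bar>degree_error f \<beta> n p j x\<bar> \<partial>\<mu>) (\<lambda>_. 0) sequentially"
proof (rule uniform_limitI)
  fix e :: real assume e: "0 < e"
  obtain A where bound: "\<And>n p x. 0 \<le> x \<Longrightarrow> 1 \<le> n \<Longrightarrow> \<bar>degree_error f \<beta> n p j x\<bar>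
      \<le> min 1 \<bar>A * ((real n - real (delay_time \<beta> n x)) / real (delay_time \<beta> n x))\<bar> + e / 4"
    using degree_error_le[OF j, of "e / 4"] e by auto
  define r where "r n x = A * ((real n - real (delay_time \<beta> n x)) / real (delay_time \<beta> n x))"
    for n :: nat and x
  have r_meas: "r n \<in> borel_measurable \<mu>" for n
    unfolding r_def[abs_def] by (rule measurable_delay_time_comp[OF sets_\<mu>])
  have "AE x in \<mu>. (\<lambda>n. r n x) \<longlonglongrightarrow> 0"
    using delay_nonneg
    by eventually_elim (unfold r_def, rule tendsto_mult_right_zero[OF delay_ratio_tendsto_0[OF \<beta>_lt_1]])
  then have "(\<lambda>n. \<integral>x. min 1 \<bar>r n x\<bar> \<partial>\<mu>) \<longlonglongrightarrow> 0"
    using integral_min_1_tendsto_0 \<mu>.finite_measure_axioms r_meas by blast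
  then have "\<forall>\<^sub>F n in sequentially. (\<integral>x. min 1 \<bar>r n x\<bar> \<partial>\<mu>) < e / 2"
    using e by (intro order_tendstoD) auto
  then show "\<forall>\<^sub>F n in sequentially. \<forall>p\<in>UNIV. dist (\<integral>x. \<bar>degree_error f \<beta> n p j x\<bar> \<partial>\<mu>) 0 < e"
    using eventually_ge_at_top[of 1]
  proof eventually_elim
    case (elim n)
    have int_min: "integrable \<mu> (\<lambda>x. min 1 \<bar>r n x\<bar>)"
      using r_meas by (intro \<mu>.integrable_const_bound[where B = 1]) auto
    show ?case
    proof
      fix p :: "nat \<Rightarrow> nat"
      have "(\<integral>x. \<bar>degree_error f \<beta> n p j x\<bar> \<partial>\<mu>) \<le> (\<integral>x. min 1 \<bar>r n x\<bar> + e / 4 \<partial>\<mu>)"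
        using delay_nonneg bound[OF _ elim(2)] int_min e unfolding r_def
        by (intro integral_mono_AE') (auto elim: eventually_mono)
      also have "\<dots> = (\<integral>x. min 1 \<bar>r n x\<bar> \<partial>\<mu>) + e / 4"
        using int_min by (subst Bochner_Integration.integral_add) (auto simp: \<mu>.prob_space)
      finally show "dist (\<integral>x. \<bar>degree_error f \<beta> n p j x\<bar> \<partial>\<mu>) 0 < e"
        using elim(1) e by (simp add: dist_real_def)
    qed
  qed
qed

lemma integrable_attach_prob: "integrable \<mu> (attach_prob f \<beta> n p i)"
  unfolding attach_prob_eq_attach_at[abs_def]
  using measurable_delay_time_comp[OF sets_\<mu>] attach_at_nonneg[OF f_pos] attach_at_le_1[OF f_pos]
  by (intro \<mu>.integrable_const_bound[where B = 1]) auto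

lemma mean_attach_prob_bounds: "0 \<le> mean_attach_prob \<mu> f \<beta> n p i" "mean_attach_prob \<mu> f \<beta> n p i \<le> 1"
proof -
  show "0 \<le> mean_attach_prob \<mu> f \<beta> n p i"
    unfolding mean_attach_prob_def attach_prob_eq_attach_at
    by (intro Bochner_Integration.integral_nonneg attach_at_nonneg[OF f_pos])
  have "mean_attach_prob \<mu> f \<beta> n p i \<le> (\<integral>x. 1 \<partial>\<mu>)"
    unfolding mean_attach_prob_def using integrable_attach_prob
    by (intro integral_mono) (auto simp: attach_prob_eq_attach_at attach_at_le_1[OF f_pos])
  then show "mean_attach_prob \<mu> f \<beta> n p i \<le> 1" by (simp add: \<mu>.prob_space)
qed

lemma mean_attach_prob_cong:
  assumes "1 \<le> n" "\<forall>l\<in>{2..n}. p l = q l"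
  shows "mean_attach_prob \<mu> f \<beta> n p i = mean_attach_prob \<mu> f \<beta> n q i"
  unfolding mean_attach_prob_def attach_prob_eq_attach_at
proof (rule integral_cong_AE)
  show "AE x in \<mu>. attach_at f p (delay_time \<beta> n x) i = attach_at f q (delay_time \<beta> n x) i"
    using delay_nonneg
  proof eventually_elim
    case (elim x)
    show ?case using delay_time_bounds(2)[OF elim assms(1)] by (rule attach_at_cong[OF assms(2)])
  qed
qed (auto intro: measurable_delay_time_comp[OF sets_\<mu>])

lemma integral_degree_error:
  "(\<integral>x. degree_error f \<beta> n p j x \<partial>\<mu>)
     = (\<Sum>i\<in>{1..n}. (if tdeg p i n = j then 1 else 0) * mean_attach_prob \<mu> f \<beta> n p i)
       - f j * real (Zcount p j n) / Psi f p n"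
proof -
  have "degree_error f \<beta> n p j x
      = (\<Sum>i\<in>{1..n}. (if tdeg p i n = j then 1 else 0) * attach_prob f \<beta> n p i x)
        - f j * real (Zcount p j n) / Psi f p n" for x
    unfolding degree_error_def degree_mass_def attach_prob_eq_attach_at
    by (intro arg_cong2[where f = minus] refl sum.cong) auto
  then show ?thesis
    using integrable_attach_prob unfolding mean_attach_prob_def
    by (simp add: Bochner_Integration.integral_diff Bochner_Integration.integral_sum \<mu>.prob_space)
qed

lemma drift_deviation_eq:
  assumes k: "1 \<le> k"
  shows "drift \<mu> f \<beta> k n p - (if k = 1 then 1 else f (k - 1) * real (Zcount p (k - 1) n) / Psi f p n)
          + f k * real (Zcount p k n) / Psi f p n
       = (if k = 1 then 0 else (\<integral>x. degree_error f \<beta> n p (k - 1) x \<partial>\<mu>))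
         - (\<integral>x. degree_error f \<beta> n p k x \<partial>\<mu>)"
proof -
  define Q where "Q j = (\<Sum>i\<in>{1..n}. (if tdeg p i n = j then 1 else 0) * mean_attach_prob \<mu> f \<beta> n p i)" for j
  have "drift \<mu> f \<beta> k n p = (if k = 1 then 1 else 0) + (Q (k - 1) - Q k)"
    unfolding drift_def Q_def degree_jump_def sum_subtractf[symmetric] by (simp add: left_diff_distrib)
  moreover have "Q 0 = 0" unfolding Q_def by (rule sum.neutral) (auto simp: tdeg_def)
  ultimately show ?thesis using k unfolding integral_degree_error Q_def[symmetric] by auto
qed

lemma drift_deviation_le:
  assumes "1 \<le> k"
  shows "\<bar>drift \<mu> f \<beta> k n p - (if k = 1 then 1 else f (k - 1) * real (Zcount p (k - 1) n) / Psi f p n)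
          + f k * real (Zcount p k n) / Psi f p n\<bar>
       \<le> (if k = 1 then 0 else (\<integral>x. \<bar>degree_error f \<beta> n p (k - 1) x\<bar> \<partial>\<mu>))
         + (\<integral>x. \<bar>degree_error f \<beta> n p k x\<bar> \<partial>\<mu>)"
  unfolding drift_deviation_eq[OF assms]
  using integral_norm_bound[of \<mu> "degree_error f \<beta> n p k"]
    integral_norm_bound[of \<mu> "degree_error f \<beta> n p (k - 1)"]
  by (auto simp: abs_le_iff)

end

section \<open>The conditional drift of the degree counts\<close>

locale delayed_tree = delayed_attachment \<mu> \<beta> f + M: prob_space M
  for \<mu> :: "real measure" and \<beta> :: real and f :: "nat \<Rightarrow> real" and M :: "'a measure" +
  fixes par :: "nat \<Rightarrow> 'a \<Rightarrow> nat" and xi :: "nat \<Rightarrow> 'a \<Rightarrow> real"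
  assumes process: "delayed_tree_process M \<beta> \<mu> f par xi"
begin

lemma measurable_par[measurable]: "par l \<in> measurable M (count_space UNIV)"
  using process unfolding delayed_tree_process_def by blast

lemma measurable_xi[measurable]: "xi l \<in> borel_measurable M"
  using process unfolding delayed_tree_process_def by blast

lemma space_filt: "space (filt M par xi n) = space M"
  unfolding filt_def by (rule space_measure_of_conv)

lemma sets_filt: "sets (filt M par xi n) = sigma_sets (space M)
     ((\<Union>k\<in>{2..n}. {par k -` {i} \<inter> space M | i. True}) \<union>
      (\<Union>k\<in>{2..n}. {xi k -` B \<inter> space M | B. B \<in> sets borel}))"
  unfolding filt_def by (rule sets_measure_of) auto

lemma subalgebra_filt: "subalgebra M (filt M par xi n)"
proof -
  have "par k -` {i} \<inter> space M \<in> sets M" for k i by (rule measurable_sets[OF measurable_par]) simp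
  moreover have "xi k -` B \<inter> space M \<in> sets M" if "B \<in> sets borel" for k B
    using measurable_sets[OF measurable_xi that] .
  ultimately show ?thesis
    unfolding subalgebra_def space_filt sets_filt by (auto intro!: sets.sigma_sets_subset)
qed

lemma sigma_finite_subalgebra_filt: "sigma_finite_subalgebra M (filt M par xi n)"
  by (intro finite_measure_subalgebra_is_sigma_finite finite_measure_subalgebra.intro
      finite_measure_subalgebra_axioms.intro subalgebra_filt M.finite_measure_axioms)

lemma measurable_filt_parent_functional:
  assumes "\<And>p q. \<forall>l\<in>{2..n}. p l = q l \<Longrightarrow> \<Phi> p = \<Phi> q"
  shows "(\<lambda>\<omega>. \<Phi> (\<lambda>l. par l \<omega>) :: real) \<in> borel_measurable (filt M par xi n)"
proof -
  have "par l -` {i} \<inter> space (filt M par xi n) \<in> sets (filt M par xi n)" if "l \<in> {2..n}" for l i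
    unfolding space_filt sets_filt using that by (intro sigma_sets.Basic) blast
  then show ?thesis
    by (intro measurable_compose[OF measurable_parent_functional[OF _ _ assms]]) auto
qed

lemma borel_measurable_parent_functional:
  assumes "finite L" "\<And>p q. \<forall>l\<in>L. p l = q l \<Longrightarrow> \<Phi> p = \<Phi> q"
  shows "(\<lambda>\<omega>. \<Phi> (\<lambda>l. par l \<omega>) :: real) \<in> borel_measurable M"
  by (intro measurable_compose[OF measurable_parent_functional[OF assms(1) _ assms(2)]]) auto

lemma prob_attach_event:
  assumes "2 \<le> n" "A \<in> sets (filt M par xi n)" "B \<in> sets borel"
  shows "measure M {\<omega>\<in>space M. \<omega> \<in> A \<and> xi (Suc n) \<omega> \<in> B \<and> par (Suc n) \<omega> = i}
       = (\<integral>\<omega>. indicator A \<omega> * (\<integral>x. indicator B x * attach_prob f \<beta> n (\<lambda>l. par l \<omega>) i x \<partial>\<mu>) \<partial>M)"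
  using process assms unfolding delayed_tree_process_def by blast

lemma cond_exp_attach_indicator:
  assumes n: "2 \<le> n"
  shows "AE \<omega> in M. real_cond_exp M (filt M par xi n) (\<lambda>\<omega>. if par (Suc n) \<omega> = i then 1 else 0) \<omega>
           = mean_attach_prob \<mu> f \<beta> n (\<lambda>l. par l \<omega>) i"
proof -
  interpret sigma_finite_subalgebra M "filt M par xi n" by (rule sigma_finite_subalgebra_filt)
  have P_meas: "(\<lambda>\<omega>. mean_attach_prob \<mu> f \<beta> n (\<lambda>l. par l \<omega>) i) \<in> borel_measurable (filt M par xi n)"
    using n by (intro measurable_filt_parent_functional mean_attach_prob_cong) auto
  show ?thesis
  proof (rule real_cond_exp_charact)
    fix A assume A: "A \<in> sets (filt M par xi n)"
    then have [measurable]: "A \<in> sets M" using subalgebra_filt by (auto simp: subalgebra_def)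
    define S where "S = {\<omega>\<in>space M. \<omega> \<in> A \<and> xi (Suc n) \<omega> \<in> UNIV \<and> par (Suc n) \<omega> = i}"
    have [measurable]: "S \<in> sets M" unfolding S_def by measurable
    have "(\<integral>\<omega>\<in>A. (if par (Suc n) \<omega> = i then 1 else 0) \<partial>M) = (\<integral>\<omega>. indicator S \<omega> \<partial>M)"
      unfolding set_lebesgue_integral_def S_def
      by (intro Bochner_Integration.integral_cong) (auto simp: indicator_def)
    also have "\<dots> = measure M S" by simp
    also have "\<dots> = (\<integral>\<omega>\<in>A. mean_attach_prob \<mu> f \<beta> n (\<lambda>l. par l \<omega>) i \<partial>M)"
      using prob_attach_event[OF n A, of UNIV i]
      by (simp add: S_def set_lebesgue_integral_def mean_attach_prob_def)
    finally show "(\<integral>\<omega>\<in>A. (if par (Suc n) \<omega> = i then 1 else 0) \<partial>M)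
        = (\<integral>\<omega>\<in>A. mean_attach_prob \<mu> f \<beta> n (\<lambda>l. par l \<omega>) i \<partial>M)" .
  next
    show "integrable M (\<lambda>\<omega>. mean_attach_prob \<mu> f \<beta> n (\<lambda>l. par l \<omega>) i)"
      using measurable_from_subalg[OF subalg P_meas] mean_attach_prob_bounds
      by (intro M.integrable_const_bound[where B = 1]) auto
  qed (use P_meas in \<open>auto intro: M.integrable_const_bound[where B = 1]\<close>)
qed

lemma integrable_degree_jump_attach:
  "integrable M (\<lambda>\<omega>. degree_jump k n (\<lambda>l. par l \<omega>) i * (if par (Suc n) \<omega> = i then 1 else 0))"
proof (rule M.integrable_const_bound[where B = 1])
  show "AE \<omega> in M. norm (degree_jump k n (\<lambda>l. par l \<omega>) i * (if par (Suc n) \<omega> = i then 1 else 0)) \<le> 1"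
    using abs_degree_jump_le_1 by (intro AE_I2) simp
  have "(\<lambda>\<omega>. degree_jump k n (\<lambda>l. par l \<omega>) i) \<in> borel_measurable M"
    by (rule borel_measurable_parent_functional[where L = "{1..n}"]) (auto intro!: degree_jump_cong)
  then show "(\<lambda>\<omega>. degree_jump k n (\<lambda>l. par l \<omega>) i * (if par (Suc n) \<omega> = i then 1 else 0))
      \<in> borel_measurable M" by measurable
qed

lemma cond_exp_degree_jump_attach:
  assumes n: "2 \<le> n" and i: "1 \<le> i"
  shows "AE \<omega> in M. real_cond_exp M (filt M par xi n)
           (\<lambda>\<omega>. degree_jump k n (\<lambda>l. par l \<omega>) i * (if par (Suc n) \<omega> = i then 1 else 0)) \<omega>
         = degree_jump k n (\<lambda>l. par l \<omega>) i * mean_attach_prob \<mu> f \<beta> n (\<lambda>l. par l \<omega>) i"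
proof -
  interpret sigma_finite_subalgebra M "filt M par xi n" by (rule sigma_finite_subalgebra_filt)
  have "(\<lambda>\<omega>. degree_jump k n (\<lambda>l. par l \<omega>) i) \<in> borel_measurable (filt M par xi n)"
    using i by (intro measurable_filt_parent_functional degree_jump_cong) auto
  then have "AE \<omega> in M. real_cond_exp M (filt M par xi n)
      (\<lambda>\<omega>. degree_jump k n (\<lambda>l. par l \<omega>) i * (if par (Suc n) \<omega> = i then 1 else 0)) \<omega>
    = degree_jump k n (\<lambda>l. par l \<omega>) i
      * real_cond_exp M (filt M par xi n) (\<lambda>\<omega>. if par (Suc n) \<omega> = i then 1 else 0) \<omega>"
    using integrable_degree_jump_attach by (intro real_cond_exp_mult) auto
  then show ?thesis
    using cond_exp_attach_indicator[OF n, of i] by eventually_elim simp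
qed

lemma cond_exp_Zcount_diff:
  assumes n: "2 \<le> n" and k: "1 \<le> k"
  shows "AE \<omega> in M. real_cond_exp M (filt M par xi n)
           (\<lambda>\<omega>. real (Zcount (\<lambda>l. par l \<omega>) k (Suc n)) - real (Zcount (\<lambda>l. par l \<omega>) k n)) \<omega>
         = drift \<mu> f \<beta> k n (\<lambda>l. par l \<omega>)"
proof -
  interpret sigma_finite_subalgebra M "filt M par xi n" by (rule sigma_finite_subalgebra_filt)
  define J where "J i \<omega> = degree_jump k n (\<lambda>l. par l \<omega>) i * (if par (Suc n) \<omega> = i then 1 else 0)"
    for i \<omega>
  define K1 :: real where "K1 = (if k = 1 then 1 else 0)"
  have int_J: "integrable M (J i)" for i
    unfolding J_def by (rule integrable_degree_jump_attach)
  have jump: "(\<lambda>\<omega>. real (Zcount (\<lambda>l. par l \<omega>) k (Suc n)) - real (Zcount (\<lambda>l. par l \<omega>) k n))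
      = (\<lambda>\<omega>. K1 + (\<Sum>i\<in>{1..n}. J i \<omega>))"
    unfolding K1_def J_def using Zcount_Suc_diff[OF k] by (simp add: mult.commute)
  have "AE \<omega> in M. real_cond_exp M (filt M par xi n) (\<lambda>\<omega>. K1 + (\<Sum>i\<in>{1..n}. J i \<omega>)) \<omega>
      = real_cond_exp M (filt M par xi n) (\<lambda>_. K1) \<omega>
        + real_cond_exp M (filt M par xi n) (\<lambda>\<omega>. \<Sum>i\<in>{1..n}. J i \<omega>) \<omega>"
    using int_J by (intro real_cond_exp_add) auto
  moreover have "AE \<omega> in M. real_cond_exp M (filt M par xi n) (\<lambda>_. K1) \<omega> = K1"
    by (intro real_cond_exp_F_meas) auto
  moreover have "AE \<omega> in M. real_cond_exp M (filt M par xi n) (\<lambda>\<omega>. \<Sum>i\<in>{1..n}. J i \<omega>) \<omega>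
      = (\<Sum>i\<in>{1..n}. real_cond_exp M (filt M par xi n) (J i) \<omega>)"
    using int_J by (intro real_cond_exp_sum) auto
  moreover have "AE \<omega> in M. \<forall>i\<in>{1..n}. real_cond_exp M (filt M par xi n) (J i) \<omega>
      = degree_jump k n (\<lambda>l. par l \<omega>) i * mean_attach_prob \<mu> f \<beta> n (\<lambda>l. par l \<omega>) i"
    using cond_exp_degree_jump_attach[OF n] unfolding J_def[abs_def]
    by (intro eventually_ball_finite) auto
  ultimately show ?thesis
    unfolding jump
  proof eventually_elim
    case (elim \<omega>)
    have "(\<Sum>i\<in>{1..n}. real_cond_exp M (filt M par xi n) (J i) \<omega>)
        = (\<Sum>i\<in>{1..n}. degree_jump k n (\<lambda>l. par l \<omega>) i * mean_attach_prob \<mu> f \<beta> n (\<lambda>l. par l \<omega>) i)"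
      using elim(4) by (intro sum.cong) auto
    with elim(1-3) show ?case unfolding drift_def K1_def by simp
  qed
qed

lemma abs_pi_k_le:
  assumes n: "2 \<le> n" and k: "1 \<le> k"
  shows "AE \<omega> in M. \<bar>pi_k M f par xi k n \<omega>\<bar>
     \<le> (if k = 1 then 0 else (\<integral>x. \<bar>degree_error f \<beta> n (\<lambda>l. par l \<omega>) (k - 1) x\<bar> \<partial>\<mu>))
       + (\<integral>x. \<bar>degree_error f \<beta> n (\<lambda>l. par l \<omega>) k x\<bar> \<partial>\<mu>)"
  using cond_exp_Zcount_diff[OF n k]
proof eventually_elim
  case (elim \<omega>)
  show ?case unfolding pi_k_def elim by (rule drift_deviation_le[OF k])
qed

lemma pi_k_tendsto_0:
  assumes k: "1 \<le> k"
  shows "(AE \<omega> in M. (\<lambda>n. pi_k M f par xi k n \<omega>) \<longlonglongrightarrow> 0)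
         \<and> (\<lambda>n. \<integral>\<omega>. \<bar>pi_k M f par xi k n \<omega>\<bar> \<partial>M) \<longlonglongrightarrow> 0"
proof (rule AE_L1_tendsto_0_of_uniform_bound[OF M.prob_space_axioms])
  define b where "b n p = (if k = 1 then 0 else (\<integral>x. \<bar>degree_error f \<beta> n p (k - 1) x\<bar> \<partial>\<mu>))
       + (\<integral>x. \<bar>degree_error f \<beta> n p k x\<bar> \<partial>\<mu>)" for n p
  have "AE \<omega> in M. 2 \<le> n \<longrightarrow> \<bar>pi_k M f par xi k n \<omega>\<bar> \<le> b n (\<lambda>l. par l \<omega>)" for n
    unfolding b_def using abs_pi_k_le[OF _ k, of n] by (cases "2 \<le> n") auto
  then show "AE \<omega> in M. \<forall>n\<ge>2. \<bar>pi_k M f par xi k n \<omega>\<bar> \<le> b n (\<lambda>l. par l \<omega>)"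
    by (subst AE_all_countable) blast
  have "uniform_limit UNIV (\<lambda>n p. if k = 1 then 0 else (\<integral>x. \<bar>degree_error f \<beta> n p (k - 1) x\<bar> \<partial>\<mu>))
      (\<lambda>_. 0) sequentially"
  proof (cases "k = 1")
    case True
    then show ?thesis using uniform_limit_const[where S = UNIV and c = "\<lambda>_. 0"] by simp
  next
    case False
    then show ?thesis using k uniform_limit_integral_degree_error[of "k - 1"] by simp
  qed
  from uniform_limit_add[OF this uniform_limit_integral_degree_error[OF k]]
  have "uniform_limit UNIV b (\<lambda>_. 0) sequentially" unfolding b_def by simp
  from uniform_limit_compose'[OF this, of "\<lambda>\<omega> l. par l \<omega>" UNIV]
  show "uniform_limit UNIV (\<lambda>n \<omega>. b n (\<lambda>l. par l \<omega>)) (\<lambda>_. 0) sequentially" by simp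
qed

end

theorem mainTheorem7:
  fixes M :: "'a measure" and \<mu> :: "real measure" and \<beta> :: real
    and f :: "nat \<Rightarrow> real" and par :: "nat \<Rightarrow> 'a \<Rightarrow> nat" and xi :: "nat \<Rightarrow> 'a \<Rightarrow> real"
  assumes "prob_space M"
    and "prob_space \<mu>" and "sets \<mu> = sets borel" and "AE x in \<mu>. x \<ge> 0"
    and "0 \<le> \<beta>" and "\<beta> < 1"
    and "assumption1 f"
    and "assumption2 \<beta> \<mu> f"
    and "delayed_tree_process M \<beta> \<mu> f par xi"
    and "k \<ge> 1"
  shows "(AE \<omega> in M. (\<lambda>n. pi_k M f par xi k n \<omega>) \<longlonglongrightarrow> 0)
         \<and> (\<lambda>n. \<integral>\<omega>. \<bar>pi_k M f par xi k n \<omega>\<bar> \<partial>M) \<longlonglongrightarrow> 0"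
proof -
  interpret delayed_tree \<mu> \<beta> f M par xi
    by (intro delayed_tree.intro delayed_attachment.intro delayed_attachment_axioms.intro
        delayed_tree_axioms.intro) (fact assms)+
  show ?thesis using assms(10) by (rule pi_k_tendsto_0)
qed

end
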